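(* Under the standing assumptions below, let $\lambda\in c_H$ and suppose $k(\lambda)$ is well defined and belongs to $\ell^q$ for some $1\le q<\infty$. Then $\lim_{N\to\infty}\|k(\lambda;N)-k(\lambda)\|_{\ell^q}=0$.
   Context: Standing assumptions: $a=(a_n)$ strictly decreasing positive reals with $a_n\to0$; $b_n\ne0$ for all $n$. $c_H:=\{(\lambda_n)\in c_0\mid\operatorname{re}\lambda_n\le0\ \forall n\}$. $k_n(\lambda):=-\frac{a_n-\lambda_n}{b_n}\prod_{m\ge1,\,m\neq n}\frac{1-\lambda_m/a_n}{1-a_m/a_n}$. For $N\in\mathbb{N}$, $k(\lambda;N)$ is the eventually zero sequence with $k_n(\lambda;N):=-\frac{a_n-\lambda_n}{b_n}\prod_{m=1,\,m\ne n}^N\frac{1-\lambda_m/a_n}{1-a_m/a_n}$ for $1\le n\le N$ and $k_n(\lambda;N):=0$ for $n>N$. *)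

theory Defs
  imports "HOL-Analysis.Analysis"
begin

(* Sequences are indexed from 0 (the paper indexes from 1; this is a pure shift). *)

definition c_H :: "(nat \<Rightarrow> complex) set" where
  "c_H = {l. l \<longlonglongrightarrow> 0 \<and> (\<forall>n. Re (l n) \<le> 0)}"

(* the m-th factor of the product defining k_n; the factor m = n is omitted (set to 1) *)
definition kfactor :: "(nat \<Rightarrow> real) \<Rightarrow> (nat \<Rightarrow> complex) \<Rightarrow> nat \<Rightarrow> nat \<Rightarrow> complex" where
  "kfactor a l n m = (if m = n then 1
     else (1 - l m / complex_of_real (a n)) / complex_of_real (1 - a m / a n))"

definition k_welldef :: "(nat \<Rightarrow> real) \<Rightarrow> (nat \<Rightarrow> complex) \<Rightarrow> bool" where
  "k_welldef a l \<longleftrightarrow> (\<forall>n. convergent_prod (kfactor a l n))"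

definition k :: "(nat \<Rightarrow> real) \<Rightarrow> (nat \<Rightarrow> complex) \<Rightarrow> (nat \<Rightarrow> complex) \<Rightarrow> nat \<Rightarrow> complex" where
  "k a b l n = - (complex_of_real (a n) - l n) / b n * prodinf (kfactor a l n)"

(* k(lambda;N): indices n < N (i.e. 1..N in the paper), product over m < N, m \<noteq> n *)
definition kN :: "(nat \<Rightarrow> real) \<Rightarrow> (nat \<Rightarrow> complex) \<Rightarrow> (nat \<Rightarrow> complex) \<Rightarrow> nat \<Rightarrow> nat \<Rightarrow> complex" where
  "kN a b l N n = (if n < N then
      - (complex_of_real (a n) - l n) / b n *
        (\<Prod>m\<in>{..<N} - {n}. (1 - l m / complex_of_real (a n)) / complex_of_real (1 - a m / a n))
    else 0)"

definition in_lq :: "real \<Rightarrow> (nat \<Rightarrow> complex) \<Rightarrow> bool" where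
  "in_lq q x \<longleftrightarrow> summable (\<lambda>n. norm (x n) powr q)"

definition lq_norm :: "real \<Rightarrow> (nat \<Rightarrow> complex) \<Rightarrow> real" where
  "lq_norm q x = (\<Sum>n. norm (x n) powr q) powr (1 / q)"

end

theory Submission
  imports Defs
begin

text \<open>Every factor of the product defining \<open>k\<^sub>n(\<lambda>)\<close> with index \<open>m > n\<close> has modulus at
  least one, because \<open>Re \<lambda>\<^sub>m \<le> 0\<close> and \<open>0 < 1 - a\<^sub>m/a\<^sub>n \<le> 1\<close>. Hence the truncated
  products \<open>k\<^sub>n(\<lambda>;N)\<close> are dominated in modulus by \<open>k\<^sub>n(\<lambda>)\<close>, so \<open>|k\<^sub>n(\<lambda>;N) - k\<^sub>n(\<lambda>)|\<^sup>q\<close> is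
  dominated by the summable sequence \<open>2\<^sup>q |k\<^sub>n(\<lambda>)|\<^sup>q\<close>, and Tannery's theorem (dominated
  convergence for series) turns the pointwise convergence \<open>k\<^sub>n(\<lambda>;N) \<rightarrow> k\<^sub>n(\<lambda>)\<close> into
  convergence in \<open>\<ell>\<^sup>q\<close>.\<close>

lemma lq_norm_tendsto_zero_dominated:
  fixes f :: "nat \<Rightarrow> nat \<Rightarrow> complex" and g :: "nat \<Rightarrow> real"
  assumes q: "q > 0"
    and lim: "\<And>n. (\<lambda>N. f N n) \<longlonglongrightarrow> 0"
    and dom: "\<And>N n. norm (f N n) \<le> g n"
    and summ: "summable (\<lambda>n. g n powr q)"
  shows "(\<lambda>N. lq_norm q (f N)) \<longlonglongrightarrow> 0"
proof -
  have dom_powr: "norm (f N n) powr q \<le> g n powr q" for N n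
    by (rule powr_mono2) (use q dom in auto)
  have termwise: "(\<lambda>N. norm (f N n) powr q) \<longlonglongrightarrow> 0" for n
    by (rule tendsto_zero_powrI[OF tendsto_norm_zero[OF lim] tendsto_const]) (use q in auto)
  have bound: "\<forall>\<^sub>F (n, N) in sequentially \<times>\<^sub>F sequentially. norm (norm (f N n) powr q) \<le> g n powr q"
    using dom_powr by (intro always_eventually) auto
  have "(\<lambda>N. \<Sum>n. norm (f N n) powr q) \<longlonglongrightarrow> (\<Sum>n. 0 :: real)"
    using tannerys_theorem[OF termwise bound summ] by simp
  moreover have "0 \<le> (\<Sum>n. norm (f N n) powr q)" for N
    by (intro suminf_nonneg summable_comparison_test[OF _ summ]) (use dom_powr in auto)
  ultimately show ?thesis
    unfolding lq_norm_def by (intro tendsto_zero_powrI[OF _ tendsto_const]) (use q in auto)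
qed

lemma norm_prod_lessThan_le_prodinf:
  fixes f :: "nat \<Rightarrow> 'a :: {real_normed_field, banach}"
  assumes cp: "convergent_prod f"
    and tail: "\<And>m. N \<le> m \<Longrightarrow> 1 \<le> norm (f m)"
  shows "norm (\<Prod>m<N. f m) \<le> norm (prodinf f)"
proof (rule tendsto_lowerbound[OF tendsto_norm])
  show "(\<lambda>M. \<Prod>m<M. f m) \<longlonglongrightarrow> prodinf f"
    using convergent_prod_LIMSEQ[OF cp] LIMSEQ_lessThan_iff_atMost by blast
  show "\<forall>\<^sub>F M in sequentially. norm (\<Prod>m<N. f m) \<le> norm (\<Prod>m<M. f m)"
    unfolding eventually_sequentially
  proof (intro exI allI impI)
    fix M assume "N \<le> M"
    then have "(\<Prod>m<M. f m) = (\<Prod>m<N. f m) * (\<Prod>m\<in>{N..<M}. f m)"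
      by (metis prod.atLeastLessThan_concat lessThan_atLeast0 zero_le)
    moreover have "1 \<le> (\<Prod>m\<in>{N..<M}. norm (f m))"
      by (rule prod_ge_1) (use tail in auto)
    ultimately show "norm (\<Prod>m<N. f m) \<le> norm (\<Prod>m<M. f m)"
      by (simp add: norm_mult prod_norm mult_le_cancel_left1)
  qed
qed simp

lemma norm_kfactor_ge_1:
  fixes a :: "nat \<Rightarrow> real" and l :: "nat \<Rightarrow> complex"
  assumes a_pos: "\<And>n. a n > 0"
    and a_dec: "\<And>m n. m < n \<Longrightarrow> a n < a m"
    and re: "Re (l m) \<le> 0"
    and "n < m"
  shows "1 \<le> norm (kfactor a l n m)"
proof -
  have an: "a n > 0" and lt: "a m < a n" using assms by auto
  define c where "c = 1 - a m / a n"
  have c: "0 < c" "c \<le> 1" using an lt a_pos[of m] by (auto simp: c_def field_simps)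
  have "1 \<le> Re (1 - l m / complex_of_real (a n))"
    using re an by (simp add: Re_divide_of_real divide_nonpos_pos)
  then have num: "1 \<le> norm (1 - l m / complex_of_real (a n))"
    using complex_Re_le_cmod order_trans by blast
  have "kfactor a l n m = (1 - l m / complex_of_real (a n)) / complex_of_real c"
    using \<open>n < m\<close> by (simp add: kfactor_def c_def)
  then have "norm (kfactor a l n m) = norm (1 - l m / complex_of_real (a n)) / c"
    using c by (simp add: norm_divide)
  also have "\<dots> \<ge> norm (1 - l m / complex_of_real (a n))"
    using c num by (simp add: le_divide_eq mult_left_le)
  finally show ?thesis using num by linarith
qed

lemma kN_eq_prod_kfactor:
  assumes "n < N"
  shows "kN a b l N n = - (complex_of_real (a n) - l n) / b n * (\<Prod>m<N. kfactor a l n m)"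
proof -
  have "(\<Prod>m<N. kfactor a l n m) = kfactor a l n n * (\<Prod>m\<in>{..<N} - {n}. kfactor a l n m)"
    using assms by (subst prod.remove[of _ n]) auto
  then show ?thesis
    using assms by (simp add: kN_def kfactor_def)
qed

lemma kN_tendsto_k:
  assumes "convergent_prod (kfactor a l n)"
  shows "(\<lambda>N. kN a b l N n) \<longlonglongrightarrow> k a b l n"
proof (rule Lim_transform_eventually)
  show "(\<lambda>N. - (complex_of_real (a n) - l n) / b n * (\<Prod>m<N. kfactor a l n m)) \<longlonglongrightarrow> k a b l n"
    unfolding k_def using convergent_prod_LIMSEQ[OF assms] LIMSEQ_lessThan_iff_atMost
    by (intro tendsto_mult[OF tendsto_const]) blast
  show "\<forall>\<^sub>F N in sequentially.
      - (complex_of_real (a n) - l n) / b n * (\<Prod>m<N. kfactor a l n m) = kN a b l N n"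
    using eventually_gt_at_top[of n] by eventually_elim (simp add: kN_eq_prod_kfactor)
qed

lemma norm_kN_le_norm_k:
  fixes a :: "nat \<Rightarrow> real" and b l :: "nat \<Rightarrow> complex"
  assumes a_pos: "\<And>n. a n > 0"
    and a_dec: "\<And>m n. m < n \<Longrightarrow> a n < a m"
    and re: "\<And>n. Re (l n) \<le> 0"
    and cp: "convergent_prod (kfactor a l n)"
  shows "norm (kN a b l N n) \<le> norm (k a b l n)"
proof (cases "n < N")
  case True
  have "norm (\<Prod>m<N. kfactor a l n m) \<le> norm (prodinf (kfactor a l n))"
    using cp norm_kfactor_ge_1[OF a_pos a_dec re] True
    by (intro norm_prod_lessThan_le_prodinf) auto
  then show ?thesis
    unfolding kN_eq_prod_kfactor[OF True] k_def norm_mult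
    by (rule mult_left_mono[OF _ norm_ge_zero])
qed (simp add: kN_def)

theorem proposition1:
  fixes a :: "nat \<Rightarrow> real" and b l :: "nat \<Rightarrow> complex" and q :: real
  assumes a_pos: "\<And>n. a n > 0"
    and a_dec: "\<And>m n. m < n \<Longrightarrow> a n < a m"
    and a_lim: "a \<longlonglongrightarrow> 0"
    and b_nz: "\<And>n. b n \<noteq> 0"
    and l_cH: "l \<in> c_H"
    and wd: "k_welldef a l"
    and q: "1 \<le> q"
    and lq: "in_lq q (k a b l)"
  shows "(\<lambda>N. lq_norm q (\<lambda>n. kN a b l N n - k a b l n)) \<longlonglongrightarrow> 0"
proof (rule lq_norm_tendsto_zero_dominated)
  have re: "\<And>n. Re (l n) \<le> 0" using l_cH by (simp add: c_H_def)
  have cp: "\<And>n. convergent_prod (kfactor a l n)" using wd by (simp add: k_welldef_def)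
  show "(\<lambda>N. kN a b l N n - k a b l n) \<longlonglongrightarrow> 0" for n
    using kN_tendsto_k[OF cp] by (rule LIM_zero)
  show "norm (kN a b l N n - k a b l n) \<le> 2 * norm (k a b l n)" for N n
    using norm_kN_le_norm_k[OF a_pos a_dec re cp, of b N n]
      norm_triangle_ineq4[of "kN a b l N n" "k a b l n"] by linarith
  show "summable (\<lambda>n. (2 * norm (k a b l n)) powr q)"
    using summable_mult[of _ "2 powr q"] lq by (simp add: in_lq_def powr_mult)
qed (use q in simp)

end
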